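(* Let $X,Y,Z$ be random variables on finite alphabets $\mathcal{X},\mathcal{Y},\mathcal{Z}$. For each $y\in\mathcal{Y}$ with $\Pr(Y=y)>0$, let $(A_y,B_y,C_y)$ be the random triple on $\mathcal{X}\times\mathcal{Y}\times\mathcal{Z}$ with $$\Pr(A_y=x,B_y=y',C_y=z)=\begin{cases}0 & \text{if } \Pr(Z=z)=0,\\ \dfrac{\Pr(X=x,Y=y',Z=z)\,\Pr(Z=z\mid Y=y)}{\Pr(Z=z)} & \text{otherwise,}\end{cases}$$ and define the unique information $\operatorname{Un}(X\to Z\mid Y)=\sum_{y:\Pr(Y=y)>0}\Pr(Y=y)\,I(A_y;C_y)$. Then $$\operatorname{Un}(X\to Z\mid Y)=\sum_{y:\Pr(Y=y)>0}\Pr(Y=y)\,H(A_y)-H(X\mid Z).$$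
   Context: $H$ is Shannon entropy and $I$ is mutual information. *)

theory Defs
  imports "HOL-Probability.Probability"
begin

(* Logarithms are to base 2; the convention 0 log 0 = 0
   is built in (terms with zero mass are 0). *)

definition entropy_mf :: "('a::finite \<Rightarrow> real) \<Rightarrow> real" where
  "entropy_mf p = - (\<Sum>a\<in>UNIV. if p a = 0 then 0 else p a * log 2 (p a))"

definition marg1 :: "('a::finite \<times> 'b::finite \<Rightarrow> real) \<Rightarrow> 'a \<Rightarrow> real" where
  "marg1 p a = (\<Sum>b\<in>UNIV. p (a, b))"

definition marg2 :: "('a::finite \<times> 'b::finite \<Rightarrow> real) \<Rightarrow> 'b \<Rightarrow> real" where
  "marg2 p b = (\<Sum>a\<in>UNIV. p (a, b))"

definition mutual_info_mf :: "('a::finite \<times> 'b::finite \<Rightarrow> real) \<Rightarrow> real" where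
  "mutual_info_mf p = (\<Sum>(a, c)\<in>UNIV.
      if p (a, c) = 0 then 0 else p (a, c) * log 2 (p (a, c) / (marg1 p a * marg2 p c)))"

definition cond_entropy_mf :: "('a::finite \<times> 'b::finite \<Rightarrow> real) \<Rightarrow> real" where
  "cond_entropy_mf p = - (\<Sum>(a, c)\<in>UNIV.
      if p (a, c) = 0 then 0 else p (a, c) * log 2 (p (a, c) / marg2 p c))"

definition probY :: "('x \<times> 'y \<times> 'z) pmf \<Rightarrow> 'y \<Rightarrow> real" where
  "probY P y = pmf (map_pmf (\<lambda>(x, y, z). y) P) y"

definition probZ :: "('x \<times> 'y \<times> 'z) pmf \<Rightarrow> 'z \<Rightarrow> real" where
  "probZ P z = pmf (map_pmf (\<lambda>(x, y, z). z) P) z"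

definition probYZ :: "('x \<times> 'y \<times> 'z) pmf \<Rightarrow> 'y \<Rightarrow> 'z \<Rightarrow> real" where
  "probYZ P y z = pmf (map_pmf (\<lambda>(x, y, z). (y, z)) P) (y, z)"

definition condZ_given_Y :: "('x \<times> 'y \<times> 'z) pmf \<Rightarrow> 'z \<Rightarrow> 'y \<Rightarrow> real" where
  "condZ_given_Y P z y = probYZ P y z / probY P y"

definition massXZ :: "('x \<times> 'y \<times> 'z) pmf \<Rightarrow> 'x \<times> 'z \<Rightarrow> real" where
  "massXZ P = (\<lambda>(x, z). pmf (map_pmf (\<lambda>(x, y, z). (x, z)) P) (x, z))"

definition tripleABC :: "('x \<times> 'y \<times> 'z) pmf \<Rightarrow> 'y \<Rightarrow> 'x \<times> 'y \<times> 'z \<Rightarrow> real" where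
  "tripleABC P y = (\<lambda>(x, y', z).
      if probZ P z = 0 then 0
      else pmf P (x, y', z) * condZ_given_Y P z y / probZ P z)"

definition massAC :: "('x \<times> 'y::finite \<times> 'z) pmf \<Rightarrow> 'y \<Rightarrow> 'x \<times> 'z \<Rightarrow> real" where
  "massAC P y = (\<lambda>(x, z). \<Sum>y'\<in>UNIV. tripleABC P y (x, y', z))"

definition massA :: "('x \<times> 'y::finite \<times> 'z::finite) pmf \<Rightarrow> 'y \<Rightarrow> 'x \<Rightarrow> real" where
  "massA P y = (\<lambda>x. \<Sum>y'\<in>UNIV. \<Sum>z\<in>UNIV. tripleABC P y (x, y', z))"

definition unique_info :: "('x::finite \<times> 'y::finite \<times> 'z::finite) pmf \<Rightarrow> real" where
  "unique_info P = (\<Sum>y\<in>{y. probY P y > 0}. probY P y * mutual_info_mf (massAC P y))"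

end

theory Submission
  imports Defs
begin

(* Write I(A_y;C_y) = H(A_y) - H(A_y|C_y). The law of (A_y, C_y) is the law of (X, Z) with
   the Z-marginal replaced by Pr(Z = . | Y = y); hence A_y given C_y = z is distributed as
   X given Z = z, and H(A_y|C_y) = sum_z Pr(Z = z | Y = y) H(X | Z = z). Averaging over y
   turns these weights into Pr(Z = z), which yields H(X|Z). *)

lemma sum_UNIV_prod:
  "(\<Sum>u\<in>(UNIV::('a::finite \<times> 'b::finite) set). f u) = (\<Sum>a\<in>UNIV. \<Sum>b\<in>UNIV. f (a, b))"
  by (simp add: sum.cartesian_product case_prod_eta)

(* No hypotheses are needed: where w c = 0 or marg2 r c = 0 both sides vanish,
   since x / 0 = 0 and log 2 0 = 0. *)
lemma cond_entropy_mf_reweight: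
  fixes r :: "'a::finite \<times> 'c::finite \<Rightarrow> real" and w :: "'c \<Rightarrow> real"
  shows "cond_entropy_mf (\<lambda>(a, c). r (a, c) * w c / marg2 r c)
    = (\<Sum>c\<in>UNIV. w c * entropy_mf (\<lambda>a. r (a, c) / marg2 r c))"
proof -
  define q where "q = (\<lambda>(a, c). r (a, c) * w c / marg2 r c)"
  have marg2_q: "marg2 q c = (if marg2 r c = 0 then 0 else w c)" for c
    by (simp add: q_def marg2_def sum_divide_distrib[symmetric] sum_distrib_right[symmetric])
  have summand: "(if q (a, c) = 0 then 0 else q (a, c) * log 2 (q (a, c) / marg2 q c))
    = w c * (if r (a, c) / marg2 r c = 0 then 0
             else r (a, c) / marg2 r c * log 2 (r (a, c) / marg2 r c))" for a c
  proof (cases "q (a, c) = 0")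
    case False
    then have "w c \<noteq> 0" "marg2 r c \<noteq> 0" by (auto simp: q_def)
    then have "q (a, c) / marg2 q c = r (a, c) / marg2 r c"
      unfolding marg2_q by (simp add: q_def)
    with False show ?thesis by (auto simp: q_def)
  qed (auto simp: q_def)
  show ?thesis
    unfolding q_def[symmetric] cond_entropy_mf_def entropy_mf_def sum_UNIV_prod
    by (subst sum.swap) (simp add: summand sum_distrib_left sum_negf)
qed

lemma cond_entropy_mf_eq_sum_entropy:
  fixes r :: "'a::finite \<times> 'c::finite \<Rightarrow> real"
  assumes "\<And>u. r u \<ge> 0"
  shows "cond_entropy_mf r = (\<Sum>c\<in>UNIV. marg2 r c * entropy_mf (\<lambda>a. r (a, c) / marg2 r c))"
proof -
  have "(\<lambda>(a, c). r (a, c) * marg2 r c / marg2 r c) = r"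
  proof (intro ext, clarify)
    fix a c
    show "r (a, c) * marg2 r c / marg2 r c = r (a, c)"
    proof (cases "marg2 r c = 0")
      case True
      then have "r (a, c) = 0"
        using assms sum_nonneg_eq_0_iff[of UNIV "\<lambda>a. r (a, c)"] by (simp add: marg2_def)
      then show ?thesis by simp
    qed simp
  qed
  then show ?thesis
    using cond_entropy_mf_reweight[of r "marg2 r"] by simp
qed

lemma mutual_info_mf_eq_entropy_minus_cond_entropy:
  fixes q :: "'a::finite \<times> 'c::finite \<Rightarrow> real"
  assumes nonneg: "\<And>u. q u \<ge> 0"
  shows "mutual_info_mf q = entropy_mf (marg1 q) - cond_entropy_mf q"
proof -
  have bounds: "q (a, c) \<le> marg1 q a" "q (a, c) \<le> marg2 q c" for a c
    unfolding marg1_def marg2_def using nonneg by (auto intro: member_le_sum)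
  have summand: "(if q (a, c) = 0 then 0
      else q (a, c) * log 2 (q (a, c) / (marg1 q a * marg2 q c)))
    = (if q (a, c) = 0 then 0 else q (a, c) * log 2 (q (a, c) / marg2 q c))
      - q (a, c) * log 2 (marg1 q a)" for a c
  proof (cases "q (a, c) = 0")
    case False
    with nonneg[of "(a, c)"] have pos: "q (a, c) > 0" by simp
    moreover from pos bounds[of a c] have "marg1 q a > 0" "marg2 q c > 0" by linarith+
    ultimately show ?thesis by (simp add: log_divide log_mult algebra_simps)
  qed simp
  have "(\<Sum>(a, c)\<in>UNIV. q (a, c) * log 2 (marg1 q a))
    = (\<Sum>a\<in>UNIV. if marg1 q a = 0 then 0 else marg1 q a * log 2 (marg1 q a))"
    unfolding sum_UNIV_prod marg1_def
    by (intro sum.cong refl) (simp add: sum_distrib_right[symmetric])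
  then show ?thesis
    unfolding mutual_info_mf_def cond_entropy_mf_def entropy_mf_def
    by (simp add: summand case_prod_beta' sum_subtractf)
qed

context
  fixes P :: "('x::finite \<times> 'y::finite \<times> 'z::finite) pmf"
begin

lemma probY_eq_sum: "probY P y = (\<Sum>x\<in>UNIV. \<Sum>z\<in>UNIV. pmf P (x, y, z))"
proof -
  have fibre: "(\<lambda>(x, y', z). y') -` {y} = UNIV \<times> {y} \<times> UNIV" by auto
  show ?thesis
    unfolding probY_def pmf_map fibre
    by (simp add: measure_measure_pmf_finite sum.cartesian_product')
qed

lemma probZ_eq_sum: "probZ P z = (\<Sum>x\<in>UNIV. \<Sum>y\<in>UNIV. pmf P (x, y, z))"
proof -
  have fibre: "(\<lambda>(x, y, z'). z') -` {z} = UNIV \<times> UNIV \<times> {z}" by auto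
  show ?thesis
    unfolding probZ_def pmf_map fibre
    by (simp add: measure_measure_pmf_finite sum.cartesian_product')
qed

lemma probYZ_eq_sum: "probYZ P y z = (\<Sum>x\<in>UNIV. pmf P (x, y, z))"
proof -
  have fibre: "(\<lambda>(x, y', z'). (y', z')) -` {(y, z)} = UNIV \<times> {y} \<times> {z}" by auto
  show ?thesis
    unfolding probYZ_def pmf_map fibre
    by (simp add: measure_measure_pmf_finite sum.cartesian_product')
qed

lemma massXZ_eq_sum: "massXZ P (x, z) = (\<Sum>y\<in>UNIV. pmf P (x, y, z))"
proof -
  have fibre: "(\<lambda>(x', y, z'). (x', z')) -` {(x, z)} = {x} \<times> UNIV \<times> {z}" by auto
  show ?thesis
    unfolding massXZ_def case_prod_conv pmf_map fibre
    by (simp add: measure_measure_pmf_finite sum.cartesian_product')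
qed

lemma marg2_massXZ: "marg2 (massXZ P) = probZ P"
  by (simp add: fun_eq_iff marg2_def massXZ_eq_sum probZ_eq_sum)

lemma condZ_given_Y_nonneg: "condZ_given_Y P z y \<ge> 0"
  by (simp add: condZ_given_Y_def probYZ_def probY_def)

lemma massAC_eq_reweight:
  "massAC P y = (\<lambda>(x, z). massXZ P (x, z) * condZ_given_Y P z y / marg2 (massXZ P) z)"
proof (intro ext, clarify)
  fix x z
  show "massAC P y (x, z) = massXZ P (x, z) * condZ_given_Y P z y / marg2 (massXZ P) z"
    unfolding massAC_def tripleABC_def massXZ_eq_sum marg2_massXZ
    by (cases "probZ P z = 0") (simp_all add: sum_distrib_right sum_divide_distrib)
qed

lemma massAC_nonneg: "massAC P y u \<ge> 0"
  unfolding massAC_eq_reweight marg2_massXZ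
  by (auto simp: massXZ_eq_sum probZ_eq_sum split: prod.split
      intro!: divide_nonneg_nonneg mult_nonneg_nonneg sum_nonneg condZ_given_Y_nonneg)

lemma marg1_massAC: "marg1 (massAC P y) = massA P y"
  unfolding marg1_def massA_def massAC_def case_prod_conv by (intro ext sum.swap)

lemma sum_probY_condZ_given_Y:
  "(\<Sum>y\<in>{y. probY P y > 0}. probY P y * condZ_given_Y P z y) = probZ P z"
proof -
  have le: "probYZ P y z \<le> probY P y" for y
    unfolding probYZ_eq_sum probY_eq_sum by (intro sum_mono member_le_sum) auto
  have nonneg: "probYZ P y z \<ge> 0" for y
    by (simp add: probYZ_def)
  have null: "probYZ P y z = 0" if "\<not> probY P y > 0" for y
    using that le[of y] nonneg[of y] by linarith
  have "(\<Sum>y\<in>{y. probY P y > 0}. probY P y * condZ_given_Y P z y)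
      = (\<Sum>y\<in>{y. probY P y > 0}. probYZ P y z)"
    by (intro sum.cong) (auto simp: condZ_given_Y_def)
  also have "\<dots> = (\<Sum>y\<in>UNIV. probYZ P y z)"
    by (intro sum.mono_neutral_left) (auto simp: null)
  also have "\<dots> = probZ P z"
    unfolding probYZ_eq_sum probZ_eq_sum by (rule sum.swap)
  finally show ?thesis .
qed

lemma weighted_cond_entropy_massAC:
  "(\<Sum>y\<in>{y. probY P y > 0}. probY P y * cond_entropy_mf (massAC P y))
    = cond_entropy_mf (massXZ P)"
proof -
  define H where "H z = entropy_mf (\<lambda>x. massXZ P (x, z) / marg2 (massXZ P) z)" for z
  have "cond_entropy_mf (massAC P y) = (\<Sum>z\<in>UNIV. condZ_given_Y P z y * H z)" for y
    unfolding massAC_eq_reweight H_def by (rule cond_entropy_mf_reweight)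
  then have "(\<Sum>y\<in>{y. probY P y > 0}. probY P y * cond_entropy_mf (massAC P y))
      = (\<Sum>y\<in>{y. probY P y > 0}. probY P y * (\<Sum>z\<in>UNIV. condZ_given_Y P z y * H z))"
    by simp
  also have "\<dots> = (\<Sum>z\<in>UNIV. (\<Sum>y\<in>{y. probY P y > 0}. probY P y * condZ_given_Y P z y) * H z)"
    by (simp add: sum_distrib_left sum_distrib_right mult.assoc) (rule sum.swap)
  also have "\<dots> = (\<Sum>z\<in>UNIV. marg2 (massXZ P) z * H z)"
    by (simp add: sum_probY_condZ_given_Y marg2_massXZ)
  also have "\<dots> = cond_entropy_mf (massXZ P)"
    unfolding H_def by (rule cond_entropy_mf_eq_sum_entropy[symmetric]) (simp add: massXZ_def)
  finally show ?thesis .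
qed

end

theorem corollary1:
  fixes P :: "('x::finite \<times> 'y::finite \<times> 'z::finite) pmf"
  shows "unique_info P =
    (\<Sum>y\<in>{y. probY P y > 0}. probY P y * entropy_mf (massA P y))
      - cond_entropy_mf (massXZ P)"
proof -
  have "unique_info P = (\<Sum>y\<in>{y. probY P y > 0}.
      probY P y * entropy_mf (massA P y) - probY P y * cond_entropy_mf (massAC P y))"
    unfolding unique_info_def
    by (simp add: mutual_info_mf_eq_entropy_minus_cond_entropy[OF massAC_nonneg] marg1_massAC
        right_diff_distrib)
  then show ?thesis
    by (simp add: sum_subtractf weighted_cond_entropy_massAC)
qed

end
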